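(* Let $G\in\mathcal{RG}^{{\underline{\kappa}},*}_{g,n}$ be a non-bipartite ribbon graph. Then: (1) $\operatorname{vp}_G:\mathbb R^{E(G)}\to\mathbb R^n$ is surjective; (2) for every $\underline b\in\mathbb R^n$, $\operatorname{vp}_G^{-1}(\underline b)$ is an affine subspace of $\mathbb R^{E(G)}$ of dimension $|E(G)|-|V(G)|$; (3) regarding the coordinates $w(e)$ as affine functions on $\operatorname{vp}_G^{-1}(\underline b)$, for every $e\in S(G)$ the function $w(e)$ is constant equal to $f_e(\underline b)$, and for every $e\in E(G)\setminus S(G)$ it is non-constant; (4) if $\underline b\in\mathbb Z^n$ and $b_1+\dots+b_n\equiv0\pmod 2$, then $\operatorname{vp}_G^{-1}(\underline b)\cap\mathbb Z^{E(G)}$ is a lattice in $\operatorname{vp}_G^{-1}(\underline b)$; otherwise it is empty.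
   Context: Ribbon graph: finite graph (loops, multiple edges allowed) with cyclic order of half-edges at each vertex, determining faces and genus. For ${\underline{\kappa}}$ a partition with odd parts, $\mathcal{RG}^{{\underline{\kappa}},*}_{g,n}$: isomorphism classes of connected ribbon graphs of genus $g$ with $n$ labeled vertices and face degrees ${\underline{\kappa}}$. Weight function $w:E(G)\to\mathbb R$; $\operatorname{vp}_G(w)_v=\sum_e a_{ve}w(e)$, $a_{ve}=2$ for a loop at $v$, $1$ for a non-loop edge at $v$, $0$ otherwise. For non-bipartite $G$, $e$ is static if some component of $G-e$ is bipartite; $S(G)$ the static edges. For $e\in S(G)$, $f_e$ is the linear function on $\mathbb R^n$: if $e$ is a bridge, with $I,J$ the labels of the two color classes of the bipartite component of $G-e$, $e$ incident to the class $I$, $f_e(\underline b)=\sum_{I}b_i-\sum_Jb_j$; if $e$ is not a bridge ($G-e$ connected bipartite, both endpoints of $e$ in class $I$), $f_e(\underline b)=\tfrac12(\sum_Ib_i-\sum_Jb_j)$. *)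

theory Defs
  imports "HOL-Analysis.Analysis" "HOL-Library.Multiset"
begin

text \<open>Edges are the elements of a finite type 'e; the half-edges
(darts) are the pairs (e, s) with s :: bool, and the edge involution swaps the two
halves of an edge.  The cyclic orders at the vertices are given by a permutation
rho of the darts; the vertices are the rho-orbits, labelled by the elements of
a finite type 'v (so n = CARD('v)) via the map vert.\<close>

definition alpha :: "'e \<times> bool \<Rightarrow> 'e \<times> bool" where
  "alpha d = (fst d, \<not> snd d)"

definition ends :: "('e \<times> bool \<Rightarrow> 'v) \<Rightarrow> 'e \<Rightarrow> 'v \<times> 'v" where
  "ends vert e = (vert (e, True), vert (e, False))"

definition ribbon_vertices :: "('e \<times> bool \<Rightarrow> 'e \<times> bool) \<Rightarrow> ('e \<times> bool \<Rightarrow> 'v) \<Rightarrow> bool" where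
  "ribbon_vertices rho vert \<longleftrightarrow> bij rho \<and> surj vert \<and>
     (\<forall>d d'. vert d = vert d' \<longleftrightarrow> (\<exists>k. (rho ^^ k) d = d'))"

definition face_orbit :: "('e \<times> bool \<Rightarrow> 'e \<times> bool) \<Rightarrow> 'e \<times> bool \<Rightarrow> ('e \<times> bool) set" where
  "face_orbit rho d = {((rho \<circ> alpha) ^^ k) d | k. True}"

definition faces :: "('e \<times> bool \<Rightarrow> 'e \<times> bool) \<Rightarrow> ('e \<times> bool) set set" where
  "faces rho = range (face_orbit rho)"

definition face_degrees :: "('e \<times> bool \<Rightarrow> 'e \<times> bool) \<Rightarrow> nat multiset" where
  "face_degrees rho = image_mset card (mset_set (faces rho))"

definition edge_rel :: "('e \<times> bool \<Rightarrow> 'v) \<Rightarrow> 'e set \<Rightarrow> ('v \<times> 'v) set" where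
  "edge_rel vert F = {(x, y). \<exists>e\<in>F. (x, y) = ends vert e \<or> (y, x) = ends vert e}"

definition graph_connected :: "('e \<times> bool \<Rightarrow> 'v) \<Rightarrow> bool" where
  "graph_connected vert \<longleftrightarrow> (\<forall>u v. (u, v) \<in> (edge_rel vert UNIV)\<^sup>*)"

definition is_component :: "('e \<times> bool \<Rightarrow> 'v) \<Rightarrow> 'e set \<Rightarrow> 'v set \<Rightarrow> bool" where
  "is_component vert F C \<longleftrightarrow> (\<exists>u. C = {v. (u, v) \<in> (edge_rel vert F)\<^sup>*})"

definition proper_2col :: "('e \<times> bool \<Rightarrow> 'v) \<Rightarrow> 'e set \<Rightarrow> 'v set \<Rightarrow> 'v set \<Rightarrow> 'v set \<Rightarrow> bool" where
  "proper_2col vert F C I J \<longleftrightarrow> I \<union> J = C \<and> I \<inter> J = {} \<and>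
     (\<forall>e\<in>F. fst (ends vert e) \<in> C \<or> snd (ends vert e) \<in> C \<longrightarrow>
        (fst (ends vert e) \<in> I \<and> snd (ends vert e) \<in> J) \<or>
        (fst (ends vert e) \<in> J \<and> snd (ends vert e) \<in> I))"

definition bipartite :: "('e \<times> bool \<Rightarrow> 'v) \<Rightarrow> bool" where
  "bipartite vert \<longleftrightarrow> (\<exists>I J. proper_2col vert UNIV UNIV I J)"

definition static_edge :: "('e \<times> bool \<Rightarrow> 'v) \<Rightarrow> 'e \<Rightarrow> bool" where
  "static_edge vert e \<longleftrightarrow>
     (\<exists>C I J. is_component vert (- {e}) C \<and> proper_2col vert (- {e}) C I J)"

definition static_data :: "('e \<times> bool \<Rightarrow> 'v) \<Rightarrow> 'e \<Rightarrow> 'v set \<Rightarrow> 'v set \<Rightarrow> 'v set \<Rightarrow> bool" where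
  "static_data vert e C I J \<longleftrightarrow> is_component vert (- {e}) C \<and> proper_2col vert (- {e}) C I J \<and>
     (fst (ends vert e) \<in> I \<or> snd (ends vert e) \<in> I)"

text \<open>f_e: bridge case when C is not everything (G - e disconnected), otherwise
G - e is connected bipartite and the value is halved.\<close>
definition f_e :: "('e \<times> bool \<Rightarrow> 'v) \<Rightarrow> 'e \<Rightarrow> real ^ 'v \<Rightarrow> real" where
  "f_e vert e b = (let (C, I, J) = (SOME (C, I, J). static_data vert e C I J) in
     if C = UNIV then ((\<Sum>i\<in>I. b $ i) - (\<Sum>j\<in>J. b $ j)) / 2
     else (\<Sum>i\<in>I. b $ i) - (\<Sum>j\<in>J. b $ j))"

definition vp :: "('e::finite \<times> bool \<Rightarrow> 'v) \<Rightarrow> real ^ 'e \<Rightarrow> real ^ 'v" where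
  "vp vert w = (\<chi> v. \<Sum>e\<in>UNIV. real (card {s. vert (e, s) = v}) * w $ e)"

definition in_RG :: "nat multiset \<Rightarrow> nat \<Rightarrow> ('e::finite \<times> bool \<Rightarrow> 'e \<times> bool) \<Rightarrow> ('e \<times> bool \<Rightarrow> 'v::finite) \<Rightarrow> bool" where
  "in_RG kappa g rho vert \<longleftrightarrow> ribbon_vertices rho vert \<and> graph_connected vert \<and>
     face_degrees rho = kappa \<and>
     int CARD('v) - int CARD('e) + int (card (faces rho)) = 2 - 2 * int g"

definition int_points :: "(real ^ 'e) set" where
  "int_points = {w. \<forall>e. w $ e \<in> \<int>}"

definition lattice_in :: "'a::euclidean_space set \<Rightarrow> 'a set \<Rightarrow> bool" where
  "lattice_in L A \<longleftrightarrow> (\<exists>x0 B. x0 \<in> A \<and> finite B \<and> independent B \<and>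
     span B = (\<lambda>y. y - x0) ` A \<and>
     L = {x0 + (\<Sum>v\<in>B. of_int (c v) *\<^sub>R v) | c. True})"

end

theory Submission
  imports Defs "HOL-Computational_Algebra.Group_Closure"
begin

(* vp is the adjoint of the map endpoint_sum sending a vertex function c to the edge function
   e |-> c(s e) + c(t e). If c(s e) + c(t e) vanishes for all edges e in F, then along F-paths
   from u the value of c is c(u) or -c(u), so c(u) <> 0 properly 2-colours the F-component
   of u. With F = E on a connected non-bipartite graph, endpoint_sum is injective: vp is onto
   and its fibres have dimension |E| - |V|. The coordinate w(e) is constant on the fibres iff
   the unit vector at e lies in the range of endpoint_sum, and then the same argument with
   F = E - {e} makes e static; for a static edge, pairing vp w = b with the +1/-1 vector of
   the colouring of G - e isolates w(e).
   Running the colouring argument modulo the group vp(Z^E) shows that it contains e_x - e_u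
   and 2 e_u, hence every integral vector of even sum. The integral points of the kernel of vp
   span it, since the kernel is cut out by integral equations, and they form a free abelian
   group; so the integral points of a fibre form a lattice in it. *)

definition endpoint_sum :: "('e::finite \<times> bool \<Rightarrow> 'v::finite) \<Rightarrow> real ^ 'v \<Rightarrow> real ^ 'e" where
  "endpoint_sum vert c = (\<chi> e. c $ vert (e, True) + c $ vert (e, False))"

lemma card_darts_at:
  "real (card {s. vert (e, s) = v}) = of_bool (vert (e, True) = v) + of_bool (vert (e, False) = v)"
proof -
  have "{s. vert (e, s) = v} = (if vert (e, True) = v then {True} else {}) \<union>
      (if vert (e, False) = v then {False} else {})"
    by (auto split: if_splits) (metis (full_types))+
  then show ?thesis by (auto split: if_splits)
qed

lemma sum_card_darts_at:
  "(\<Sum>v\<in>UNIV. c $ v * real (card {s. vert (e, s) = v})) = c $ vert (e, True) + c $ vert (e, False)"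
  by (simp add: card_darts_at distrib_left sum.distrib of_bool_def if_distrib[of "\<lambda>x. c $ _ * x"]
      sum.delta cong: if_cong)

lemma inner_vp: "c \<bullet> vp vert w = endpoint_sum vert c \<bullet> w"
proof -
  have "c \<bullet> vp vert w = (\<Sum>v\<in>UNIV. \<Sum>e\<in>UNIV. w $ e * (c $ v * real (card {s. vert (e, s) = v})))"
    by (simp add: inner_vec_def vp_def sum_distrib_left mult_ac)
  also have "\<dots> = (\<Sum>e\<in>UNIV. w $ e * (\<Sum>v\<in>UNIV. c $ v * real (card {s. vert (e, s) = v})))"
    by (subst sum.swap) (simp add: sum_distrib_left)
  also have "\<dots> = endpoint_sum vert c \<bullet> w"
    by (simp add: sum_card_darts_at inner_vec_def endpoint_sum_def mult_ac)
  finally show ?thesis .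
qed

lemma linear_vp: "linear (vp vert)"
  by (rule linearI) (simp_all add: vec_eq_iff vp_def sum.distrib sum_distrib_left algebra_simps)

lemma adjoint_endpoint_sum: "adjoint (endpoint_sum vert) = vp vert"
  by (rule adjoint_unique) (simp add: inner_vp)

lemma adjoint_vp: "adjoint (vp vert) = endpoint_sum vert"
proof (rule adjoint_unique, intro allI)
  fix w c
  have "vp vert w \<bullet> c = endpoint_sum vert c \<bullet> w"
    by (subst inner_commute) (rule inner_vp)
  then show "vp vert w \<bullet> c = w \<bullet> endpoint_sum vert c"
    by (simp only: inner_commute)
qed

definition add_subgroup :: "'a::ab_group_add set \<Rightarrow> bool" where
  "add_subgroup M \<longleftrightarrow> 0 \<in> M \<and> (\<forall>x\<in>M. \<forall>y\<in>M. x - y \<in> M)"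

lemma add_subgroup_zero: "add_subgroup {0}"
  by (simp add: add_subgroup_def)

lemma add_subgroup_diff: "add_subgroup M \<Longrightarrow> x \<in> M \<Longrightarrow> y \<in> M \<Longrightarrow> x - y \<in> M"
  by (simp add: add_subgroup_def)

lemma add_subgroup_minus: "add_subgroup M \<Longrightarrow> x \<in> M \<Longrightarrow> - x \<in> M"
  using add_subgroup_diff[of M 0 x] by (simp add: add_subgroup_def)

lemma add_subgroup_add: "add_subgroup M \<Longrightarrow> x \<in> M \<Longrightarrow> y \<in> M \<Longrightarrow> x + y \<in> M"
  using add_subgroup_diff[of M x "- y"] add_subgroup_minus[of M y] by simp

lemma add_subgroup_sum: "add_subgroup M \<Longrightarrow> (\<And>u. u \<in> A \<Longrightarrow> f u \<in> M) \<Longrightarrow> sum f A \<in> M"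
  by (induction A rule: infinite_finite_induct) (auto simp: add_subgroup_def add_subgroup_add)

lemma add_subgroup_scaleR_int:
  fixes M :: "'a::real_vector set"
  assumes "add_subgroup M" "v \<in> M"
  shows "of_int q *\<^sub>R v \<in> M"
proof -
  have nat: "of_nat n *\<^sub>R v \<in> M" for n
    by (induction n) (use assms in \<open>auto simp: add_subgroup_def add_subgroup_add algebra_simps\<close>)
  show ?thesis
  proof (cases "q \<ge> 0")
    case True
    then show ?thesis using nat[of "nat q"] by simp
  next
    case False
    then show ?thesis using add_subgroup_minus[OF assms(1) nat[of "nat (- q)"]] by simp
  qed
qed

lemma edge_rel_iff:
  "(x, y) \<in> edge_rel vert F \<longleftrightarrow>
     (\<exists>e\<in>F. x = vert (e, True) \<and> y = vert (e, False) \<or> y = vert (e, True) \<and> x = vert (e, False))"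
  by (auto simp: edge_rel_def ends_def)

lemma component_ends_iff:
  assumes "C = {v. (u, v) \<in> (edge_rel vert F)\<^sup>*}" "e \<in> F"
  shows "vert (e, True) \<in> C \<longleftrightarrow> vert (e, False) \<in> C"
proof -
  have "(vert (e, True), vert (e, False)) \<in> edge_rel vert F" "(vert (e, False), vert (e, True)) \<in> edge_rel vert F"
    using assms(2) by (auto simp: edge_rel_iff)
  then show ?thesis using assms(1) by (auto intro: rtrancl_into_rtrancl)
qed

lemma connected_edge_closed_eq_UNIV:
  assumes "graph_connected vert" "u \<in> C" "\<And>e. vert (e, True) \<in> C \<longleftrightarrow> vert (e, False) \<in> C"
  shows "C = UNIV"
proof -
  have "v \<in> C" for v
  proof -
    have "(u, v) \<in> (edge_rel vert UNIV)\<^sup>*" using assms(1) by (simp add: graph_connected_def)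
    then show ?thesis
      by (induction rule: rtrancl_induct) (use assms(2,3) in \<open>auto simp: edge_rel_iff\<close>)
  qed
  then show ?thesis by auto
qed

lemma path_sign_mod_add_subgroup:
  assumes M: "add_subgroup M"
    and edges: "\<And>e. e \<in> F \<Longrightarrow> \<phi> (vert (e, True)) + \<phi> (vert (e, False)) \<in> M"
    and "(u, v) \<in> (edge_rel vert F)\<^sup>*"
  shows "\<phi> v - \<phi> u \<in> M \<or> \<phi> v + \<phi> u \<in> M"
  using assms(3)
proof (induction rule: rtrancl_induct)
  case base
  then show ?case using M by (simp add: add_subgroup_def)
next
  case (step y z)
  have yz: "\<phi> y + \<phi> z \<in> M"
    using step(2) edges by (auto simp: edge_rel_iff add.commute)
  have "(\<phi> y + \<phi> z) - (\<phi> y - \<phi> u) \<in> M" if "\<phi> y - \<phi> u \<in> M"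
    using add_subgroup_diff[OF M yz that] .
  moreover have "(\<phi> y + \<phi> z) - (\<phi> y + \<phi> u) \<in> M" if "\<phi> y + \<phi> u \<in> M"
    using add_subgroup_diff[OF M yz that] .
  ultimately show ?case
    using step.IH by (auto simp: algebra_simps)
qed

lemma component_proper_2col_mod_add_subgroup:
  assumes M: "add_subgroup M"
    and edges: "\<And>e. e \<in> F \<Longrightarrow> \<phi> (vert (e, True)) + \<phi> (vert (e, False)) \<in> M"
    and not_double: "\<phi> u + \<phi> u \<notin> M"
    and C: "C = {v. (u, v) \<in> (edge_rel vert F)\<^sup>*}"
  shows "proper_2col vert F C {x\<in>C. \<phi> x - \<phi> u \<in> M} {x\<in>C. \<phi> x + \<phi> u \<in> M}"
  unfolding proper_2col_def ends_def fst_conv snd_conv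
proof (intro conjI ballI impI)
  show "{x\<in>C. \<phi> x - \<phi> u \<in> M} \<union> {x\<in>C. \<phi> x + \<phi> u \<in> M} = C"
    using path_sign_mod_add_subgroup[where \<phi>=\<phi>, OF M edges] C by auto
  have "(\<phi> x + \<phi> u) - (\<phi> x - \<phi> u) \<notin> M" for x
    using not_double by (simp add: algebra_simps)
  then show "{x\<in>C. \<phi> x - \<phi> u \<in> M} \<inter> {x\<in>C. \<phi> x + \<phi> u \<in> M} = {}"
    using add_subgroup_diff[OF M] by blast
next
  fix e assume e: "e \<in> F" and "vert (e, True) \<in> C \<or> vert (e, False) \<in> C"
  then have in_C: "vert (e, True) \<in> C" "vert (e, False) \<in> C"
    using component_ends_iff[OF C e] by auto
  let ?s = "\<phi> (vert (e, True))" and ?t = "\<phi> (vert (e, False))"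
  have st: "?s + ?t \<in> M" using edges[OF e] .
  have "(?s + ?t) - (?s - \<phi> u) \<in> M" if "?s - \<phi> u \<in> M"
    using add_subgroup_diff[OF M st that] .
  moreover have "(?s + ?t) - (?s + \<phi> u) \<in> M" if "?s + \<phi> u \<in> M"
    using add_subgroup_diff[OF M st that] .
  moreover have "?s - \<phi> u \<in> M \<or> ?s + \<phi> u \<in> M"
    using path_sign_mod_add_subgroup[where \<phi>=\<phi>, OF M edges] in_C(1) C by auto
  ultimately show "vert (e, True) \<in> {x\<in>C. \<phi> x - \<phi> u \<in> M} \<and> vert (e, False) \<in> {x\<in>C. \<phi> x + \<phi> u \<in> M} \<or>
      vert (e, True) \<in> {x\<in>C. \<phi> x + \<phi> u \<in> M} \<and> vert (e, False) \<in> {x\<in>C. \<phi> x - \<phi> u \<in> M}"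
    using in_C by (auto simp: algebra_simps)
qed

lemma endpoint_sum_eq_0_imp_eq_0:
  assumes conn: "graph_connected vert" and nonbip: "\<not> bipartite vert"
    and "endpoint_sum vert c = 0"
  shows "c = 0"
proof (rule ccontr)
  assume "c \<noteq> 0"
  then obtain u where u: "c $ u \<noteq> 0" by (auto simp: vec_eq_iff)
  have edges: "c $ vert (e, True) + c $ vert (e, False) \<in> {0}" for e
    using assms(3) by (simp add: endpoint_sum_def vec_eq_iff)
  have "UNIV = {v. (u, v) \<in> (edge_rel vert UNIV)\<^sup>*}"
    using conn by (auto simp: graph_connected_def)
  from component_proper_2col_mod_add_subgroup[OF add_subgroup_zero edges _ this] u
  have "proper_2col vert UNIV UNIV {x. c $ x - c $ u = 0} {x. c $ x + c $ u = 0}"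
    by simp
  then show False using nonbip by (auto simp: bipartite_def)
qed

lemma linear_endpoint_sum: "linear (endpoint_sum vert)"
  by (rule linearI) (simp_all add: vec_eq_iff endpoint_sum_def algebra_simps)

lemma inj_endpoint_sum:
  assumes "graph_connected vert" "\<not> bipartite vert"
  shows "inj (endpoint_sum vert)"
  using endpoint_sum_eq_0_imp_eq_0[OF assms] linear_injective_0[OF linear_endpoint_sum]
  by blast

lemma surj_vp:
  assumes "graph_connected vert" "\<not> bipartite vert"
  shows "surj (vp vert)"
  using surj_adjoint_iff_inj[OF linear_endpoint_sum[of vert]] inj_endpoint_sum[OF assms]
  by (simp add: adjoint_endpoint_sum)

lemma ker_vp: "vp vert -` {0} = (range (endpoint_sum vert))\<^sup>\<bottom>"
  using ker_orthogonal_comp_adjoint[OF linear_vp] by (simp add: adjoint_vp)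

lemma dim_ker_vp:
  fixes vert :: "'e::finite \<times> bool \<Rightarrow> 'v::finite"
  assumes "graph_connected vert" "\<not> bipartite vert"
  shows "dim (vp vert -` {0}) + CARD('v) = CARD('e)"
proof -
  have "subspace (range (endpoint_sum vert))"
    by (simp add: linear_endpoint_sum linear_subspace_image)
  from dim_subspace_orthogonal_to_vectors[OF this subspace_UNIV]
  have "dim (range (endpoint_sum vert)\<^sup>\<bottom>) + dim (range (endpoint_sum vert)) = CARD('e)"
    by (simp add: orthogonal_comp_def)
  moreover have "dim (range (endpoint_sum vert)) = CARD('v)"
    using dim_image_eq[OF linear_endpoint_sum, of vert UNIV] inj_endpoint_sum[OF assms]
    by simp
  ultimately show ?thesis by (simp add: ker_vp)
qed

lemma linear_vimage_eq_translation:
  assumes "linear f" "f w0 = b"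
  shows "f -` {b} = (+) w0 ` (f -` {0})"
proof (intro set_eqI iffI)
  fix x assume "x \<in> f -` {b}"
  then have "x - w0 \<in> f -` {0}" using assms by (simp add: linear_diff)
  then show "x \<in> (+) w0 ` (f -` {0})" by (auto intro!: image_eqI[of _ _ "x - w0"])
qed (use assms in \<open>auto simp: linear_add\<close>)

lemma vp_fibre_affine_aff_dim:
  fixes vert :: "'e::finite \<times> bool \<Rightarrow> 'v::finite"
  assumes "graph_connected vert" "\<not> bipartite vert"
  shows "affine (vp vert -` {b}) \<and> aff_dim (vp vert -` {b}) = int CARD('e) - int CARD('v)"
proof -
  obtain w0 where "vp vert w0 = b" using surj_vp[OF assms] by (metis surjD)
  then have fibre: "vp vert -` {b} = (+) w0 ` (vp vert -` {0})"
    by (rule linear_vimage_eq_translation[OF linear_vp])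
  have ker: "subspace (vp vert -` {0})"
    using linear_subspace_kernel[OF linear_vp] by (simp add: vimage_def)
  show ?thesis
    using dim_ker_vp[OF assms] unfolding fibre
    by (simp add: subspace_imp_affine[OF ker] aff_dim_subspace[OF ker] aff_dim_translation_eq
        flip: affine_translation)
qed

definition colour_sign :: "'v set \<Rightarrow> 'v set \<Rightarrow> real ^ 'v::finite" where
  "colour_sign I J = (\<chi> v. if v \<in> I then 1 else if v \<in> J then -1 else 0)"

lemma inner_colour_sign:
  assumes "I \<inter> J = {}"
  shows "colour_sign I J \<bullet> b = sum (($) b) I - sum (($) b) J"
proof -
  have "colour_sign I J \<bullet> b = (\<Sum>v\<in>UNIV. of_bool (v \<in> I) * b $ v) - (\<Sum>v\<in>UNIV. of_bool (v \<in> J) * b $ v)"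
    unfolding inner_vec_def colour_sign_def sum_subtractf[symmetric]
    by (rule sum.cong) (use assms in auto)
  then show ?thesis
    by (simp add: Collect_mem_eq)
qed

lemma endpoint_sum_colour_sign:
  assumes "proper_2col vert F C I J" "e \<in> F"
  shows "endpoint_sum vert (colour_sign I J) $ e = 0"
  using assms by (auto simp: proper_2col_def ends_def endpoint_sum_def colour_sign_def)

lemma proper_2col_edge_weight:
  assumes "proper_2col vert (- {e}) C I J" "vp vert w = b"
  shows "sum (($) b) I - sum (($) b) J = w $ e * endpoint_sum vert (colour_sign I J) $ e"
proof -
  have "sum (($) b) I - sum (($) b) J = endpoint_sum vert (colour_sign I J) \<bullet> w"
    using assms by (simp add: inner_colour_sign proper_2col_def flip: inner_vp)
  also have "\<dots> = (\<Sum>e'\<in>UNIV. if e' = e then endpoint_sum vert (colour_sign I J) $ e * w $ e else 0)"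
    unfolding inner_vec_def using endpoint_sum_colour_sign[OF assms(1)] by (intro sum.cong) auto
  finally show ?thesis by simp
qed

lemma static_edge_static_data:
  assumes conn: "graph_connected vert" and "static_edge vert e"
  shows "\<exists>C I J. static_data vert e C I J"
proof -
  obtain C I J where comp: "is_component vert (- {e}) C" and col: "proper_2col vert (- {e}) C I J"
    using assms(2) by (auto simp: static_edge_def)
  obtain u where C: "C = {v. (u, v) \<in> (edge_rel vert (- {e}))\<^sup>*}"
    using comp by (auto simp: is_component_def)
  have "vert (e, True) \<in> C \<or> vert (e, False) \<in> C"
  proof (rule ccontr)
    assume off_C: "\<not> ?thesis"
    have "vert (e', True) \<in> C \<longleftrightarrow> vert (e', False) \<in> C" for e'
      using off_C component_ends_iff[OF C, of e'] by (cases "e' = e") auto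
    moreover have "u \<in> C" by (simp add: C)
    ultimately have "C = UNIV"
      using connected_edge_closed_eq_UNIV[OF conn] by blast
    then show False using off_C by blast
  qed
  then have "vert (e, True) \<in> I \<union> J \<or> vert (e, False) \<in> I \<union> J"
    using col by (simp add: proper_2col_def)
  moreover have "proper_2col vert (- {e}) C J I"
    using col by (auto simp: proper_2col_def)
  ultimately show ?thesis
    using comp col unfolding static_data_def ends_def by auto
qed

lemma static_data_nonbridge_ends:
  assumes "static_data vert e UNIV I J" "\<not> bipartite vert"
  shows "vert (e, True) \<in> I \<and> vert (e, False) \<in> I"
proof (rule ccontr)
  assume not_both: "\<not> ?thesis"
  from assms(1) have col: "proper_2col vert (- {e}) UNIV I J"
    and incident: "vert (e, True) \<in> I \<or> vert (e, False) \<in> I"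
    by (auto simp: static_data_def ends_def)
  have "proper_2col vert UNIV UNIV I J"
    using col not_both incident by (auto simp: proper_2col_def ends_def)
  then show False using assms(2) by (auto simp: bipartite_def)
qed

lemma static_data_bridge_ends:
  assumes "static_data vert e C I J" "C \<noteq> UNIV" "graph_connected vert"
  shows "vert (e, True) \<in> I \<and> vert (e, False) \<notin> C \<or> vert (e, False) \<in> I \<and> vert (e, True) \<notin> C"
proof -
  from assms(1) obtain u where C: "C = {v. (u, v) \<in> (edge_rel vert (- {e}))\<^sup>*}"
    and IJ: "I \<union> J = C" and incident: "vert (e, True) \<in> I \<or> vert (e, False) \<in> I"
    by (auto simp: static_data_def is_component_def proper_2col_def ends_def)
  have "\<not> (vert (e, True) \<in> C \<and> vert (e, False) \<in> C)"
  proof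
    assume "vert (e, True) \<in> C \<and> vert (e, False) \<in> C"
    then have "vert (e', True) \<in> C \<longleftrightarrow> vert (e', False) \<in> C" for e'
      using component_ends_iff[OF C, of e'] by (cases "e' = e") auto
    moreover have "u \<in> C" by (simp add: C)
    ultimately show False
      using connected_edge_closed_eq_UNIV[OF assms(3)] assms(2) by blast
  qed
  then show ?thesis using IJ incident by blast
qed

lemma static_edge_weight_eq_f_e:
  assumes conn: "graph_connected vert" and nonbip: "\<not> bipartite vert"
    and "static_edge vert e" and w: "vp vert w = b"
  shows "w $ e = f_e vert e b"
proof -
  obtain C I J where some: "(SOME (C, I, J). static_data vert e C I J) = (C, I, J)"
    using prod_cases3 by metis
  have data: "static_data vert e C I J"
    using someI_ex[of "\<lambda>(C, I, J). static_data vert e C I J"] static_edge_static_data[OF conn assms(3)]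
    by (simp add: some)
  then have weight: "sum (($) b) I - sum (($) b) J = w $ e * endpoint_sum vert (colour_sign I J) $ e"
    using w by (intro proper_2col_edge_weight) (auto simp: static_data_def)
  have IJ: "I \<union> J = C" "I \<inter> J = {}"
    using data by (auto simp: static_data_def proper_2col_def)
  show ?thesis
  proof (cases "C = UNIV")
    case True
    then have "vert (e, True) \<in> I \<and> vert (e, False) \<in> I"
      using static_data_nonbridge_ends[OF _ nonbip] data by simp
    then have "endpoint_sum vert (colour_sign I J) $ e = 2"
      by (simp add: endpoint_sum_def colour_sign_def)
    then show ?thesis using weight True by (simp add: f_e_def some)
  next
    case False
    then have "endpoint_sum vert (colour_sign I J) $ e = 1"
      using static_data_bridge_ends[OF data False conn] IJ
      by (auto simp: endpoint_sum_def colour_sign_def)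
    then show ?thesis using weight False by (simp add: f_e_def some)
  qed
qed

lemma vp_fibre_const_coord_imp_axis_in_range:
  assumes w0: "vp vert w0 = b" and const: "\<forall>w\<in>vp vert -` {b}. w $ e = c"
  shows "axis e 1 \<in> range (endpoint_sum vert)"
proof -
  have "z $ e = 0" if "vp vert z = 0" for z
  proof -
    have "w0 + z \<in> vp vert -` {b}" "w0 \<in> vp vert -` {b}"
      using w0 that by (simp_all add: linear_add[OF linear_vp])
    then have "(w0 + z) $ e = c" "w0 $ e = c" using const by blast+
    then show ?thesis by simp
  qed
  then have "axis e 1 \<in> (vp vert -` {0})\<^sup>\<bottom>"
    by (auto simp: orthogonal_comp_def orthogonal_def inner_axis)
  also have "\<dots> = range (endpoint_sum vert)"
    unfolding ker_vp
    by (rule orthogonal_comp_self) (simp add: linear_endpoint_sum linear_subspace_image)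
  finally show ?thesis .
qed

lemma axis_eq_endpoint_sum_imp_static_edge:
  assumes "axis e 1 = endpoint_sum vert c"
  shows "static_edge vert e"
proof -
  have sums: "c $ vert (e', True) + c $ vert (e', False) = (if e' = e then 1 else 0)" for e'
    using arg_cong[OF assms, of "\<lambda>x. x $ e'"] by (simp add: endpoint_sum_def axis_def)
  define u where "u = (if c $ vert (e, True) \<noteq> 0 then vert (e, True) else vert (e, False))"
  have "c $ u \<noteq> 0" using sums[of e] by (auto simp: u_def)
  moreover have "c $ vert (e', True) + c $ vert (e', False) \<in> {0}" if "e' \<in> - {e}" for e'
    using sums[of e'] that by simp
  ultimately have "proper_2col vert (- {e}) {v. (u, v) \<in> (edge_rel vert (- {e}))\<^sup>*}
      {x\<in>{v. (u, v) \<in> (edge_rel vert (- {e}))\<^sup>*}. c $ x - c $ u \<in> {0}}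
      {x\<in>{v. (u, v) \<in> (edge_rel vert (- {e}))\<^sup>*}. c $ x + c $ u \<in> {0}}"
    by (intro component_proper_2col_mod_add_subgroup[OF add_subgroup_zero]) auto
  then show ?thesis
    unfolding static_edge_def is_component_def by blast
qed

lemma nonstatic_edge_weight_nonconst:
  assumes "graph_connected vert" "\<not> bipartite vert" "\<not> static_edge vert e"
  shows "\<not> (\<exists>c. \<forall>w\<in>vp vert -` {b}. w $ e = c)"
proof
  assume "\<exists>c. \<forall>w\<in>vp vert -` {b}. w $ e = c"
  moreover obtain w0 where "vp vert w0 = b" using surj_vp[OF assms(1,2)] by (metis surjD)
  ultimately have "axis e 1 \<in> range (endpoint_sum vert)"
    using vp_fibre_const_coord_imp_axis_in_range by blast
  then show False
    using axis_eq_endpoint_sum_imp_static_edge assms(3) by blast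
qed

lemma vp_int_points_parity:
  assumes "w \<in> int_points"
  shows "(\<forall>v. vp vert w $ v \<in> \<int>) \<and> (\<exists>k::int. (\<Sum>v\<in>UNIV. vp vert w $ v) = 2 * of_int k)"
proof
  have int: "w $ e \<in> \<int>" for e using assms by (simp add: int_points_def)
  then show "\<forall>v. vp vert w $ v \<in> \<int>"
    by (auto simp: vp_def intro!: Ints_sum Ints_mult)
  have "(\<Sum>v\<in>UNIV. vp vert w $ v) = (\<chi> v. 1) \<bullet> vp vert w"
    by (simp add: inner_vec_def)
  also have "\<dots> = 2 * (\<Sum>e\<in>UNIV. w $ e)"
    by (simp only: inner_vp) (simp add: inner_vec_def endpoint_sum_def sum_distrib_left)
  finally show "\<exists>k::int. (\<Sum>v\<in>UNIV. vp vert w $ v) = 2 * of_int k"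
    using Ints_sum[of UNIV "\<lambda>e. w $ e"] int by (auto elim!: Ints_cases)
qed

lemma add_subgroup_vp_int_points: "add_subgroup (vp vert ` int_points)"
  unfolding add_subgroup_def
proof (intro conjI ballI)
  show "0 \<in> vp vert ` int_points"
    using linear_0[OF linear_vp] by (force simp: int_points_def)
  fix x y assume "x \<in> vp vert ` int_points" "y \<in> vp vert ` int_points"
  then obtain wx wy where "wx \<in> int_points" "wy \<in> int_points" "x = vp vert wx" "y = vp vert wy"
    by blast
  then show "x - y \<in> vp vert ` int_points"
    by (auto simp: int_points_def linear_diff[OF linear_vp] intro!: image_eqI[of _ _ "wx - wy"])
qed

lemma vp_axis: "vp vert (axis e 1) = axis (vert (e, True)) 1 + axis (vert (e, False)) 1"
  by (simp add: vec_eq_iff vp_def axis_def card_darts_at if_distrib cong: if_cong)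

lemma nonbipartite_axis_in_add_subgroup:
  assumes conn: "graph_connected vert" and nonbip: "\<not> bipartite vert" and M: "add_subgroup M"
    and edges: "\<And>e. axis (vert (e, True)) 1 + axis (vert (e, False)) 1 \<in> M"
  shows "axis u 1 + axis u 1 \<in> M" and "axis x 1 - axis u 1 \<in> M"
proof -
  have comp: "UNIV = {v. (u, v) \<in> (edge_rel vert UNIV)\<^sup>*}"
    using conn by (auto simp: graph_connected_def)
  show double: "axis u 1 + axis u 1 \<in> M"
  proof (rule ccontr)
    assume "axis u 1 + axis u 1 \<notin> M"
    from component_proper_2col_mod_add_subgroup[where \<phi>="\<lambda>x. axis x 1", OF M _ this comp] edges
    have "proper_2col vert UNIV UNIV {x. axis x 1 - axis u 1 \<in> M} {x. axis x 1 + axis u 1 \<in> M}"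
      by simp
    then show False using nonbip by (auto simp: bipartite_def)
  qed
  have "axis x 1 - axis u 1 \<in> M \<or> axis x 1 + axis u 1 \<in> M"
    using path_sign_mod_add_subgroup[where \<phi>="\<lambda>x. axis x 1" and F=UNIV, OF M edges] conn
    by (simp add: graph_connected_def)
  moreover have "(axis x 1 + axis u 1) - (axis u 1 + axis u 1) \<in> M" if "axis x 1 + axis u 1 \<in> M"
    using add_subgroup_diff[OF M that double] .
  ultimately show "axis x 1 - axis u 1 \<in> M" by auto
qed

lemma even_int_vector_in_add_subgroup:
  fixes M :: "(real ^ 'v::finite) set"
  assumes M: "add_subgroup M"
    and diffs: "\<And>x. axis x 1 - axis u 1 \<in> M" and double: "axis u 1 + axis u 1 \<in> M"
    and int: "\<forall>v. b $ v \<in> \<int>" and even: "(\<Sum>v\<in>UNIV. b $ v) = 2 * of_int k"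
  shows "b \<in> M"
proof -
  have coord: "of_int \<lfloor>b $ v\<rfloor> = b $ v" for v
    using int by (auto elim: Ints_cases)
  have "b = (\<Sum>v\<in>UNIV. of_int \<lfloor>b $ v\<rfloor> *\<^sub>R (axis v 1 - axis u 1)) + of_int k *\<^sub>R (axis u 1 + axis u 1)"
    using even by (simp add: vec_eq_iff coord axis_def algebra_simps sum_subtractf
        sum_distrib_right[symmetric] of_bool_def if_distrib cong: if_cong)
  also have "\<dots> \<in> M"
    by (intro add_subgroup_add[OF M] add_subgroup_sum[OF M] add_subgroup_scaleR_int[OF M] diffs double)
  finally show ?thesis .
qed

lemma vp_int_points_surj:
  assumes "graph_connected vert" "\<not> bipartite vert"
    and "\<forall>v. b $ v \<in> \<int>" "(\<Sum>v\<in>UNIV. b $ v) = 2 * of_int k"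
  shows "b \<in> vp vert ` int_points"
proof -
  have "vp vert (axis e 1) \<in> vp vert ` int_points" for e
    by (simp add: int_points_def axis_def)
  then have "axis (vert (e, True)) 1 + axis (vert (e, False)) 1 \<in> vp vert ` int_points" for e
    by (simp only: vp_axis)
  from nonbipartite_axis_in_add_subgroup[OF assms(1,2) add_subgroup_vp_int_points this]
  show ?thesis
    by (intro even_int_vector_in_add_subgroup[OF add_subgroup_vp_int_points _ _ assms(3,4)])
qed

lemma int_subgroup_coord_generator:
  fixes L :: "(real ^ 'n::finite) set"
  assumes L: "add_subgroup L" and int: "L \<subseteq> int_points"
  shows "\<exists>v\<in>L. \<forall>x\<in>L. \<exists>q::int. x $ i = of_int q * v $ i"
proof -
  define T where "T = {m::int. \<exists>x\<in>L. x $ i = of_int m}"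
  have "group_closure T \<subseteq> T"
  proof
    fix m assume "m \<in> group_closure T"
    then show "m \<in> T"
    proof induction
      case (base m)
      then show ?case using L by (auto simp: T_def add_subgroup_def intro: bexI[of _ 0])
    next
      case (diff m n)
      then show ?case using add_subgroup_diff[OF L] by (force simp: T_def)
    qed
  qed
  then have T: "T = range (times (Gcd T))"
    using group_closure_eq[of T] group_closure.base[of _ T] by blast
  have "Gcd T * 1 \<in> range (times (Gcd T))" by blast
  then have "Gcd T \<in> T" using T by simp
  then obtain v where "v \<in> L" "v $ i = of_int (Gcd T)"
    by (auto simp: T_def)
  moreover have "\<exists>q::int. x $ i = of_int q * of_int (Gcd T)" if "x \<in> L" for x
  proof -
    have "x $ i \<in> \<int>" using int that by (auto simp: int_points_def)
    then obtain m where "x $ i = of_int m" by (elim Ints_cases)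
    moreover from this have "m \<in> range (times (Gcd T))" using T that by (auto simp: T_def)
    ultimately show ?thesis by (auto simp: mult.commute)
  qed
  ultimately show ?thesis by metis
qed

definition int_combinations :: "'a::real_vector set \<Rightarrow> 'a set" where
  "int_combinations B = {(\<Sum>v\<in>B. of_int (c v) *\<^sub>R v) | c. True}"

lemma int_combinations_subset_span: "int_combinations B \<subseteq> span B"
proof
  fix x assume "x \<in> int_combinations B"
  then obtain c where "x = (\<Sum>v\<in>B. of_int (c v) *\<^sub>R v)"
    by (auto simp: int_combinations_def)
  then show "x \<in> span B"
    by (simp add: span_sum span_mul span_base)
qed

lemma int_combinations_insert:
  assumes "finite B" "v \<notin> B"
  shows "x \<in> int_combinations (insert v B) \<longleftrightarrow> (\<exists>q::int. x - of_int q *\<^sub>R v \<in> int_combinations B)"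
proof
  assume "x \<in> int_combinations (insert v B)"
  then obtain c where "x = (\<Sum>u\<in>insert v B. of_int (c u) *\<^sub>R u)"
    by (auto simp: int_combinations_def)
  then have "x - of_int (c v) *\<^sub>R v = (\<Sum>u\<in>B. of_int (c u) *\<^sub>R u)"
    using assms by simp
  then show "\<exists>q::int. x - of_int q *\<^sub>R v \<in> int_combinations B"
    by (auto simp: int_combinations_def)
next
  assume "\<exists>q::int. x - of_int q *\<^sub>R v \<in> int_combinations B"
  then obtain q c where "x - of_int q *\<^sub>R v = (\<Sum>u\<in>B. of_int (c u) *\<^sub>R u)"
    by (auto simp: int_combinations_def)
  moreover have "(\<Sum>u\<in>B. of_int ((c(v := q)) u) *\<^sub>R u) = (\<Sum>u\<in>B. of_int (c u) *\<^sub>R u)"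
    using assms(2) by (intro sum.cong) auto
  ultimately have "x = (\<Sum>u\<in>insert v B. of_int ((c(v := q)) u) *\<^sub>R u)"
    using assms by (simp add: algebra_simps)
  then show "x \<in> int_combinations (insert v B)"
    by (auto simp: int_combinations_def)
qed

lemma int_subgroup_basis_insert_coord:
  fixes L :: "(real ^ 'n::finite) set"
  assumes L: "add_subgroup L" and int: "L \<subseteq> int_points"
    and B: "finite B" "independent B" "B \<subseteq> {x\<in>L. x $ i = 0}" "int_combinations B = {x\<in>L. x $ i = 0}"
  shows "\<exists>B'. finite B' \<and> independent B' \<and> B' \<subseteq> L \<and> int_combinations B' = L"
proof -
  obtain v where v: "v \<in> L" and gen: "\<And>x. x \<in> L \<Longrightarrow> \<exists>q::int. x $ i = of_int q * v $ i"
    using int_subgroup_coord_generator[OF L int] by blast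
  show ?thesis
  proof (cases "v $ i = 0")
    case True
    then have "{x\<in>L. x $ i = 0} = L" using gen by fastforce
    then show ?thesis using B by auto
  next
    case False
    have "span B \<subseteq> {x. x $ i = 0}"
      using B(3) by (intro span_minimal) (auto simp: subspace_def)
    then have "v \<notin> span B" using False by auto
    then have indep: "independent (insert v B)" and "v \<notin> B"
      using B(2) span_base by (auto simp: independent_insert)
    have "x \<in> int_combinations (insert v B) \<longleftrightarrow> x \<in> L" for x
    proof -
      have "x - of_int q *\<^sub>R v \<in> L \<longleftrightarrow> x \<in> L" for q
        using add_subgroup_diff[OF L _ add_subgroup_scaleR_int[OF L v, of q]]
          add_subgroup_add[OF L _ add_subgroup_scaleR_int[OF L v, of q], of "x - of_int q *\<^sub>R v"]
        by auto
      moreover have "x \<in> L \<Longrightarrow> \<exists>q::int. (x - of_int q *\<^sub>R v) $ i = 0"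
        using gen by force
      ultimately show ?thesis
        unfolding int_combinations_insert[OF B(1) \<open>v \<notin> B\<close>] B(4) by auto
    qed
    then show ?thesis
      using B(1,3) indep v by (intro exI[of _ "insert v B"]) auto
  qed
qed

lemma int_subgroup_basis:
  fixes L :: "(real ^ 'n::finite) set"
  assumes "add_subgroup L" "L \<subseteq> int_points"
  shows "\<exists>B. finite B \<and> independent B \<and> B \<subseteq> L \<and> int_combinations B = L"
proof -
  have basis_on_support: "\<exists>B. finite B \<and> independent B \<and> B \<subseteq> L \<and> int_combinations B = L"
    if "finite S" "add_subgroup L" "L \<subseteq> int_points" "\<forall>x\<in>L. \<forall>j. j \<notin> S \<longrightarrow> x $ j = 0"
    for S and L :: "(real ^ 'n) set"
    using that
  proof (induction S arbitrary: L rule: finite_induct)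
    case empty
    then have "L = {0}" by (auto simp: vec_eq_iff add_subgroup_def)
    then show ?case by (intro exI[of _ "{}"]) (simp add: int_combinations_def independent_empty)
  next
    case (insert i S)
    let ?L' = "{x\<in>L. x $ i = 0}"
    have "add_subgroup ?L'"
      using insert.prems(1) by (auto simp: add_subgroup_def)
    moreover have "?L' \<subseteq> int_points" using insert.prems(2) by auto
    moreover have "\<forall>x\<in>?L'. \<forall>j. j \<notin> S \<longrightarrow> x $ j = 0" using insert.prems(3) by auto
    ultimately have "\<exists>B. finite B \<and> independent B \<and> B \<subseteq> ?L' \<and> int_combinations B = ?L'"
      by (rule insert.IH)
    then obtain B where "finite B" "independent B" "B \<subseteq> ?L'" "int_combinations B = ?L'"
      by blast
    then show ?case
      by (rule int_subgroup_basis_insert_coord[OF insert.prems(1,2)])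
  qed
  show ?thesis
    by (rule basis_on_support[of UNIV]) (use assms in simp_all)
qed

lemma span_int_points: "span (int_points :: (real ^ 'n::finite) set) = UNIV"
proof -
  have "Basis \<subseteq> (int_points :: (real ^ 'n) set)"
    by (auto simp: Basis_vec_def int_points_def axis_def)
  then show ?thesis
    by (metis span_Basis span_mono top.extremum_uniqueI)
qed

lemma span_int_points_Int_hyperplane:
  fixes K :: "(real ^ 'n::finite) set"
  assumes K: "subspace K" and span_K: "span (K \<inter> int_points) = K" and r: "r \<in> int_points"
  shows "span ({x\<in>K. r \<bullet> x = 0} \<inter> int_points) = {x\<in>K. r \<bullet> x = 0}"
    (is "span (?H \<inter> int_points) = ?H")
proof
  have "subspace ?H"
    using K unfolding subspace_def by (auto simp: inner_add_right)
  then show "span (?H \<inter> int_points) \<subseteq> ?H"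
    by (intro span_minimal) auto
  have r_int: "r \<bullet> y \<in> \<int>" if "y \<in> int_points" for y
    using that r unfolding inner_vec_def int_points_def by (auto intro!: Ints_sum Ints_mult)
  show "?H \<subseteq> span (?H \<inter> int_points)"
  proof (cases "\<forall>s\<in>K \<inter> int_points. r \<bullet> s = 0")
    case True
    then have "K \<inter> int_points \<subseteq> ?H \<inter> int_points" by auto
    then have "K \<subseteq> span (?H \<inter> int_points)" using span_mono span_K by metis
    then show ?thesis by auto
  next
    case False
    then obtain s0 where s0: "s0 \<in> K" "s0 \<in> int_points" "r \<bullet> s0 \<noteq> 0" by blast
    text \<open>Up to the factor r \<bullet> s0, T is the projection onto the hyperplane along the integral
      vector s0, so it maps integral points of K to integral points of the hyperplane.\<close>
    define T where "T y = (r \<bullet> s0) *\<^sub>R y - (r \<bullet> y) *\<^sub>R s0" for y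
    have lin: "linear T" unfolding T_def
      by (rule linearI) (simp_all add: algebra_simps inner_add_right)
    have T_int: "T y \<in> ?H \<inter> int_points" if "y \<in> K \<inter> int_points" for y
    proof -
      have "T y \<in> K" using K s0(1) that by (simp add: T_def subspace_diff subspace_scale)
      moreover have "r \<bullet> T y = 0" by (simp add: T_def inner_diff_right)
      moreover have "T y \<in> int_points"
        using that s0(2) r_int[of y] r_int[of s0] unfolding T_def int_points_def
        by (auto intro!: Ints_diff Ints_mult)
      ultimately show ?thesis by simp
    qed
    show ?thesis
    proof
      fix x assume x: "x \<in> ?H"
      then have "T x \<in> T ` span (K \<inter> int_points)" using span_K by simp
      also have "\<dots> = span (T ` (K \<inter> int_points))" by (rule span_linear_image[OF lin, symmetric])
      also have "\<dots> \<subseteq> span (?H \<inter> int_points)" using T_int by (intro span_mono) auto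
      finally have "(1 / (r \<bullet> s0)) *\<^sub>R T x \<in> span (?H \<inter> int_points)" by (rule span_mul)
      moreover have "(1 / (r \<bullet> s0)) *\<^sub>R T x = x" using x s0(3) by (simp add: T_def)
      ultimately show "x \<in> span (?H \<inter> int_points)" by simp
    qed
  qed
qed

lemma span_int_points_solutions:
  fixes R :: "(real ^ 'n::finite) set"
  assumes "finite R" "R \<subseteq> int_points"
  shows "span ({x. \<forall>r\<in>R. r \<bullet> x = 0} \<inter> int_points) = {x. \<forall>r\<in>R. r \<bullet> x = 0}"
  using assms
proof (induction R rule: finite_induct)
  case empty
  then show ?case by (simp add: span_int_points)
next
  case (insert r R)
  have "subspace {x. \<forall>r\<in>R. r \<bullet> x = 0}"
    by (auto simp: subspace_def inner_add_right)
  moreover have "r \<in> int_points" "R \<subseteq> int_points" using insert.prems by auto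
  ultimately have "span ({x \<in> {x. \<forall>r\<in>R. r \<bullet> x = 0}. r \<bullet> x = 0} \<inter> int_points) =
      {x \<in> {x. \<forall>r\<in>R. r \<bullet> x = 0}. r \<bullet> x = 0}"
    using insert.IH by (intro span_int_points_Int_hyperplane)
  moreover have "{x. \<forall>r\<in>insert r R. r \<bullet> x = 0} = {x \<in> {x. \<forall>r\<in>R. r \<bullet> x = 0}. r \<bullet> x = 0}"
    by auto
  ultimately show ?case by simp
qed

lemma span_int_points_ker_vp:
  fixes vert :: "'e::finite \<times> bool \<Rightarrow> 'v::finite"
  shows "span (vp vert -` {0} \<inter> int_points) = vp vert -` {0}"
proof -
  let ?R = "range (\<lambda>v. endpoint_sum vert (axis v 1))"
  have "span ({x. \<forall>r\<in>?R. r \<bullet> x = 0} \<inter> int_points) = {x. \<forall>r\<in>?R. r \<bullet> x = 0}"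
    by (rule span_int_points_solutions) (auto simp: int_points_def endpoint_sum_def axis_def)
  moreover have "vp vert -` {0} = {x. \<forall>r\<in>?R. r \<bullet> x = 0}"
    by (auto simp: vec_eq_iff inner_axis' simp flip: inner_vp)
  ultimately show ?thesis by simp
qed

lemma lattice_in_translated_subspace:
  fixes K :: "(real ^ 'n::finite) set"
  assumes K: "subspace K" and span_K: "span (K \<inter> int_points) = K" and x0: "x0 \<in> int_points"
  shows "lattice_in ((+) x0 ` K \<inter> int_points) ((+) x0 ` K)"
proof -
  have "add_subgroup (K \<inter> int_points)"
    using K by (auto simp: add_subgroup_def subspace_0 subspace_diff int_points_def)
  then obtain B where B: "finite B" "independent B" "B \<subseteq> K \<inter> int_points"
    and comb: "int_combinations B = K \<inter> int_points"
    using int_subgroup_basis by blast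
  have "span B = K"
  proof
    show "span B \<subseteq> K" using B(3) K by (simp add: span_minimal)
    show "K \<subseteq> span B"
      using span_mono[OF int_combinations_subset_span[of B]] span_K by (simp add: comb span_span)
  qed
  moreover have "(+) x0 ` K \<inter> int_points = (+) x0 ` (K \<inter> int_points)"
    using x0 by (auto simp: int_points_def image_iff intro: bexI[of _ "_ - x0"])
  ultimately show ?thesis
    using x0 subspace_0[OF K] unfolding lattice_in_def
    by (intro exI[of _ x0] exI[of _ B]) (auto simp: B comb[symmetric] int_combinations_def image_image)
qed

lemma lattice_in_vp_fibre:
  assumes "graph_connected vert" "\<not> bipartite vert"
    and "\<forall>v. b $ v \<in> \<int>" "(\<Sum>v\<in>UNIV. b $ v) = 2 * of_int k"
  shows "lattice_in (vp vert -` {b} \<inter> int_points) (vp vert -` {b})"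
proof -
  obtain x0 where "x0 \<in> int_points" "vp vert x0 = b"
    using vp_int_points_surj[OF assms] by blast
  moreover have "subspace (vp vert -` {0})"
    using linear_subspace_kernel[OF linear_vp] by (simp add: vimage_def)
  ultimately show ?thesis
    using lattice_in_translated_subspace[OF _ span_int_points_ker_vp]
    by (simp add: linear_vimage_eq_translation[OF linear_vp])
qed

theorem lemma3p4:
  fixes kappa :: "nat multiset" and g :: nat
    and rho :: "'e::finite \<times> bool \<Rightarrow> 'e \<times> bool" and vert :: "'e \<times> bool \<Rightarrow> 'v::finite"
  assumes "\<forall>k\<in>#kappa. odd k"
    and "in_RG kappa g rho vert"
    and "\<not> bipartite vert"
  shows "surj (vp vert) \<and>
    (\<forall>b. affine (vp vert -` {b}) \<and> aff_dim (vp vert -` {b}) = int CARD('e) - int CARD('v)) \<and>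
    (\<forall>b e. static_edge vert e \<longrightarrow> (\<forall>w\<in>vp vert -` {b}. w $ e = f_e vert e b)) \<and>
    (\<forall>b e. \<not> static_edge vert e \<longrightarrow> \<not> (\<exists>c. \<forall>w\<in>vp vert -` {b}. w $ e = c)) \<and>
    (\<forall>b. (\<forall>v. b $ v \<in> \<int>) \<and> (\<exists>k::int. (\<Sum>v\<in>UNIV. b $ v) = 2 * of_int k) \<longrightarrow>
            lattice_in (vp vert -` {b} \<inter> int_points) (vp vert -` {b})) \<and>
    (\<forall>b. \<not> ((\<forall>v. b $ v \<in> \<int>) \<and> (\<exists>k::int. (\<Sum>v\<in>UNIV. b $ v) = 2 * of_int k)) \<longrightarrow>
            vp vert -` {b} \<inter> int_points = {})"
proof -
  have conn: "graph_connected vert" using assms(2) by (simp add: in_RG_def)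
  note nonbip = assms(3)
  show ?thesis
  proof (intro conjI allI impI ballI)
    show "surj (vp vert)" by (rule surj_vp[OF conn nonbip])
    fix b :: "real ^ 'v"
    show "affine (vp vert -` {b})" "aff_dim (vp vert -` {b}) = int CARD('e) - int CARD('v)"
      using vp_fibre_affine_aff_dim[OF conn nonbip] by simp_all
    fix e
    show "w $ e = f_e vert e b" if "static_edge vert e" "w \<in> vp vert -` {b}" for w
      using static_edge_weight_eq_f_e[OF conn nonbip] that by simp
    show "\<not> (\<exists>c. \<forall>w\<in>vp vert -` {b}. w $ e = c)" if "\<not> static_edge vert e"
      using nonstatic_edge_weight_nonconst[OF conn nonbip that] .
    show "lattice_in (vp vert -` {b} \<inter> int_points) (vp vert -` {b})"
      if "(\<forall>v. b $ v \<in> \<int>) \<and> (\<exists>k::int. (\<Sum>v\<in>UNIV. b $ v) = 2 * of_int k)"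
      using lattice_in_vp_fibre[OF conn nonbip] that by blast
    show "vp vert -` {b} \<inter> int_points = {}"
      if "\<not> ((\<forall>v. b $ v \<in> \<int>) \<and> (\<exists>k::int. (\<Sum>v\<in>UNIV. b $ v) = 2 * of_int k))"
      using vp_int_points_parity that by blast
  qed
qed

end
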